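(* Fix a capacity $q$, a reservation vector $\kappa$ and a hierarchical horizontal type correspondence $\rho$. The hierarchical choice rule $A\mapsto C^h(A,\kappa,\rho)$ satisfies (i) the substitutes property: for every set $A$ of individuals and distinct individuals $i,j\notin A$, if $i\in C^h(A\cup\{i,j\},\kappa,\rho)$ then $i\in C^h(A\cup\{i\},\kappa,\rho)$; and (ii) size monotonicity: for every $A$ and every individual $i$, $|C^h(A,\kappa,\rho)|\le|C^h(A\cup\{i\},\kappa,\rho)|$.
   Context: Setting. $I$ is a finite set of individuals with a strict merit ranking $\succ$. $H=\{h_1,\dots,h_L\}$ is a set of horizontal types and $\rho(i)\subseteq H$ is the set of horizontal types of $i$; $\rho^{-1}(h)=\{i:h\in\rho(i)\}$. Hierarchical: for any $h,h'$ with $\rho^{-1}(h)\cap\rho^{-1}(h')\neq\emptyset$, either $\rho^{-1}(h)\subsetneq\rho^{-1}(h')$ or $\rho^{-1}(h')\subsetneq\rho^{-1}(h)$; in the latter case $h$ contains $h'$. There are $q$ positions and $\kappa_j\in\mathbb{Z}_+$ positions reserved for $h_j$; a chosen individual counts against every type she has. Hierarchical choice rule $C^h(A,\kappa,\rho)$: Step 1: let $H^1$ be the types containing no other type. If no individual in $A$ has any horizontal type, choose the $\min(q,|A|)$ highest-ranked individuals and stop. Otherwise, for each $h_j\in H^1$ (in a fixed order, never exceeding the remaining positions), choose all not-yet-chosen individuals of $A$ of type $h_j$ if there are at most $\kappa_j$ of them, and otherwise the $\kappa_j$ highest-ranked; reduce the available positions and the reservation of every type containing $h_j$ by the number chosen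 (floored at $0$); remove $h_j$. Step $n\ge2$: stop if no positions or individuals remain; if no type remains, fill remaining positions with the highest-ranked remaining individuals and stop; otherwise let $H^n$ be the remaining types containing no other remaining type and process each $h_j\in H^n$ as in Step 1 with the updated reservation. $C^h(A,\kappa,\rho)$ is the set of all individuals chosen. *)

theory Defs
  imports Main
begin

text \<open>Merit ranking: a strict linear order R on the individuals I; (i, j) \<in> R means i \<succ> j.
  top R k X = the k highest-ranked members of X (all of X if card X \<le> k).\<close>
definition top :: "'i rel \<Rightarrow> nat \<Rightarrow> 'i set \<Rightarrow> 'i set" where
  "top R k X = {i \<in> X. card {j \<in> X. (j, i) \<in> R} < k}"

definition preim :: "'i set \<Rightarrow> ('i \<Rightarrow> 'h set) \<Rightarrow> 'h \<Rightarrow> 'i set" where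
  "preim I \<rho> h = {i \<in> I. h \<in> \<rho> i}"

definition contains :: "'i set \<Rightarrow> ('i \<Rightarrow> 'h set) \<Rightarrow> 'h \<Rightarrow> 'h \<Rightarrow> bool" where
  "contains I \<rho> h h' \<longleftrightarrow> preim I \<rho> h \<inter> preim I \<rho> h' \<noteq> {} \<and> preim I \<rho> h' \<subset> preim I \<rho> h"

definition hierarchical :: "'i set \<Rightarrow> 'h set \<Rightarrow> ('i \<Rightarrow> 'h set) \<Rightarrow> bool" where
  "hierarchical I H \<rho> \<longleftrightarrow> (\<forall>h\<in>H. \<forall>h'\<in>H. h \<noteq> h' \<longrightarrow> preim I \<rho> h \<inter> preim I \<rho> h' \<noteq> {} \<longrightarrow>
      preim I \<rho> h \<subset> preim I \<rho> h' \<or> preim I \<rho> h' \<subset> preim I \<rho> h)"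

text \<open>State of the procedure: (remaining types, chosen individuals, remaining positions,
  current reservations).\<close>
type_synonym ('i, 'h) st = "'h set \<times> 'i set \<times> nat \<times> ('h \<Rightarrow> nat)"

definition process_type :: "'i set \<Rightarrow> 'i rel \<Rightarrow> ('i \<Rightarrow> 'h set) \<Rightarrow> 'i set \<Rightarrow> 'h \<Rightarrow> ('i, 'h) st \<Rightarrow> ('i, 'h) st" where
  "process_type I R \<rho> A h st = (case st of (Rem, S, p, kap) \<Rightarrow>
     (let X = {i \<in> A - S. h \<in> \<rho> i};
          Ch = top R (min p (kap h)) X;
          n = card Ch
      in (Rem - {h}, S \<union> Ch, p - n,
          (\<lambda>h''. if contains I \<rho> h'' h then kap h'' - n else kap h''))))"

definition minimal_types :: "'i set \<Rightarrow> ('i \<Rightarrow> 'h set) \<Rightarrow> 'h set \<Rightarrow> 'h set" where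
  "minimal_types I \<rho> Rem = {h \<in> Rem. \<not> (\<exists>h'\<in>Rem. contains I \<rho> h h')}"

definition round :: "'i set \<Rightarrow> 'i rel \<Rightarrow> ('i \<Rightarrow> 'h set) \<Rightarrow> 'h list \<Rightarrow> 'i set \<Rightarrow> ('i, 'h) st \<Rightarrow> ('i, 'h) st" where
  "round I R \<rho> hs A st =
     foldl (\<lambda>s h. process_type I R \<rho> A h s) st
       (filter (\<lambda>h. h \<in> minimal_types I \<rho> (fst st)) hs)"

text \<open>After length hs steps no type remains (each step
  removes at least one remaining type); remaining positions are then filled by merit.\<close>
definition Ch :: "'i set \<Rightarrow> 'i rel \<Rightarrow> 'h list \<Rightarrow> nat \<Rightarrow> 'i set \<Rightarrow> ('h \<Rightarrow> nat) \<Rightarrow> ('i \<Rightarrow> 'h set) \<Rightarrow> 'i set" where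
  "Ch I R hs q A \<kappa> \<rho> =
     (if \<forall>i\<in>A. \<rho> i = {} then top R q A
      else (case (round I R \<rho> hs A ^^ length hs) (set hs, {}, q, \<kappa>) of
              (Rem, S, p, kap) \<Rightarrow> S \<union> top R p (A - S)))"

end

theory Submission
  imports Defs
begin

(* Both properties follow from C(A \<union> {j}) \<subseteq> C(A) \<union> {j} and |C(A)| \<le> |C(A \<union> {j})|.
   To see these, run the procedure on A and on A \<union> {j} side by side. Remaining positions and
   reservations are determined by the set chosen so far, so it suffices to compare the two chosen
   sets S and T. They stay coupled: either T = S \<union> {j}, or T = (S \<union> {j}) - {x} for a single
   displaced x, and then either all q positions are filled or x and j belong to exactly the same
   remaining types. Processing a type h that contains no other remaining type preserves this: by
   hierarchy every other remaining type contains h or is disjoint from it, so all members of h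
   look alike to the remaining types, and taking the top candidates of h changes the coupling by
   at most one swap. The final fill by merit acts like one more type, containing everybody, with
   reservation q. *)

section \<open>Top candidates under a strict ranking\<close>

lemma top_subset: "top R k X \<subseteq> X"
  by (auto simp: top_def)

lemma top_mono: "k \<le> k' \<Longrightarrow> top R k X \<subseteq> top R k' X"
  by (auto simp: top_def)

lemma top_0 [simp]: "top R 0 X = {}"
  by (auto simp: top_def)

lemma top_empty [simp]: "top R k {} = {}"
  by (auto simp: top_def)

lemma top_insert_subset:
  assumes "finite X"
  shows "top R k (insert x X) - {x} \<subseteq> top R k X"
proof
  fix i assume i: "i \<in> top R k (insert x X) - {x}"
  have "card {j \<in> X. (j, i) \<in> R} \<le> card {j \<in> insert x X. (j, i) \<in> R}"
    using assms by (intro card_mono) auto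
  with i show "i \<in> top R k X" by (auto simp: top_def)
qed

lemma card_predecessors_strict_mono:
  assumes "finite X" "trans R" "irrefl R" "(a, b) \<in> R" "a \<in> X"
  shows "card {j \<in> X. (j, a) \<in> R} < card {j \<in> X. (j, b) \<in> R}"
proof (rule psubset_card_mono)
  show "finite {j \<in> X. (j, b) \<in> R}" using assms(1) by simp
  have "a \<notin> {j \<in> X. (j, a) \<in> R}" using assms(3) by (auto simp: irrefl_def)
  moreover have "{j \<in> X. (j, a) \<in> R} \<subseteq> {j \<in> X. (j, b) \<in> R}"
    using assms(2,4) by (auto dest: transD)
  ultimately show "{j \<in> X. (j, a) \<in> R} \<subset> {j \<in> X. (j, b) \<in> R}"
    using assms(4,5) by blast
qed

lemma bij_betw_card_predecessors:
  assumes "finite X" "X \<subseteq> I" "strict_linear_order_on I R"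
  shows "bij_betw (\<lambda>i. card {j \<in> X. (j, i) \<in> R}) X {..<card X}"
    (is "bij_betw ?rank X _")
proof -
  have tr: "trans R" and irr: "irrefl R" and tot: "total_on I R"
    using assms(3) by (auto simp: strict_linear_order_on_def)
  have inj: "inj_on ?rank X"
  proof (rule inj_onI, rule ccontr)
    fix a b assume ab: "a \<in> X" "b \<in> X" "?rank a = ?rank b" "a \<noteq> b"
    then have "(a, b) \<in> R \<or> (b, a) \<in> R"
      using tot assms(2) by (auto simp: total_on_def)
    then show False
      using card_predecessors_strict_mono[OF assms(1) tr irr] ab by fastforce
  qed
  have "?rank i < card X" if "i \<in> X" for i
  proof (rule psubset_card_mono[OF assms(1)])
    show "{j \<in> X. (j, i) \<in> R} \<subset> X" using that irr by (auto simp: irrefl_def)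
  qed
  then have "?rank ` X \<subseteq> {..<card X}" by blast
  moreover have "card (?rank ` X) = card {..<card X}"
    using inj by (simp add: card_image)
  ultimately have "?rank ` X = {..<card X}"
    by (simp add: card_subset_eq)
  with inj show ?thesis by (simp add: bij_betw_def)
qed

lemma card_top:
  assumes "finite X" "X \<subseteq> I" "strict_linear_order_on I R"
  shows "card (top R k X) = min k (card X)"
proof -
  let ?rank = "\<lambda>i. card {j \<in> X. (j, i) \<in> R}"
  have bij: "bij_betw ?rank X {..<card X}"
    by (rule bij_betw_card_predecessors[OF assms])
  have "top R k X = {i \<in> X. ?rank i < k}" by (simp add: top_def)
  then have "bij_betw ?rank (top R k X) ({..<card X} \<inter> {..<k})"
    using bij by (auto simp: bij_betw_def inj_on_def)
  then have "card (top R k X) = card ({..<card X} \<inter> {..<k})"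
    by (rule bij_betw_same_card)
  also have "{..<card X} \<inter> {..<k} = {..<min k (card X)}" by auto
  finally show ?thesis by simp
qed

lemma subset_card_le_Suc_cases:
  assumes "finite A" "B \<subseteq> A" "card A \<le> Suc (card B)"
  shows "A = B \<or> (\<exists>y \<in> A - B. A = insert y B)"
proof (cases "card A = card B")
  case True
  then show ?thesis using card_subset_eq[OF assms(1,2)] by simp
next
  case False
  then have "card (A - B) = 1"
    using assms card_mono[OF assms(1,2)] by (simp add: card_Diff_subset finite_subset)
  then obtain y where "A - B = {y}" by (auto simp: card_Suc_eq)
  then show ?thesis using assms(2) by blast
qed

lemma top_insert_cases:
  assumes "finite X" "insert x X \<subseteq> I" "strict_linear_order_on I R" "x \<notin> X"
  shows "top R k (insert x X) = top R k X \<or> top R k (insert x X) = insert x (top R k X)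
    \<or> (\<exists>y \<in> top R k X. top R k (insert x X) = insert x (top R k X - {y}))"
proof -
  define T T' where "T = top R k X" and "T' = top R k (insert x X)"
  have fin: "finite T" "finite T'"
    unfolding T_def T'_def using assms(1) by (auto intro: finite_subset[OF top_subset])
  have "card T = min k (card X)"
    unfolding T_def using assms(2) by (intro card_top[OF assms(1) _ assms(3)]) auto
  moreover have "card T' = min k (card (insert x X))"
    unfolding T'_def using assms(1) by (intro card_top[OF _ assms(2,3)]) auto
  ultimately have card: "card T = min k (card X)" "card T' = min k (Suc (card X))"
    using assms(1,4) by simp_all
  have sub: "T' - {x} \<subseteq> T" unfolding T_def T'_def by (rule top_insert_subset[OF assms(1)])
  have "x \<notin> T" using assms(4) top_subset unfolding T_def by fast
  have "T' = T \<or> T' = insert x T \<or> (\<exists>y \<in> T. T' = insert x (T - {y}))"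
  proof (cases "x \<in> T'")
    case False
    then have "T' \<subseteq> T" using sub by blast
    moreover have "card T \<le> card T'" using card by simp
    ultimately have "T' = T" using card_seteq[OF fin(1)] by blast
    then show ?thesis by simp
  next
    case True
    then have "card T \<le> Suc (card (T' - {x}))" using card fin(2) by simp
    then consider "T = T' - {x}" | y where "y \<in> T - (T' - {x})" "T = insert y (T' - {x})"
      using subset_card_le_Suc_cases[OF fin(1) sub] by blast
    then show ?thesis
    proof cases
      case 1
      then have "T' = insert x T" using True by auto
      then show ?thesis by simp
    next
      case (2 y)
      then have "T' = insert x (T - {y})" using True \<open>x \<notin> T\<close> by auto
      then show ?thesis using 2 by auto
    qed
  qed
  then show ?thesis unfolding T_def T'_def .
qed

lemma top_mono_cases:
  assumes "finite X" "X \<subseteq> I" "strict_linear_order_on I R" "k \<le> k'" "k' \<le> Suc k"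
  shows "top R k' X = top R k X \<or>
    (\<exists>y \<in> X - top R k X. top R k' X = insert y (top R k X) \<and> card (top R k' X) = k' \<and> k' = Suc k)"
proof -
  define T T' where "T = top R k X" and "T' = top R k' X"
  have fin: "finite T'" unfolding T'_def using assms(1) by (auto intro: finite_subset[OF top_subset])
  have sub: "T \<subseteq> T'" unfolding T_def T'_def by (rule top_mono[OF assms(4)])
  have card: "card T = min k (card X)" "card T' = min k' (card X)"
    unfolding T_def T'_def using card_top[OF assms(1-3)] by simp_all
  then have "card T' \<le> Suc (card T)" using assms(5) by (auto simp: min_def)
  then consider "T' = T" | y where "y \<in> T' - T" "T' = insert y T"
    using subset_card_le_Suc_cases[OF fin sub] by blast
  then have "T' = T \<or> (\<exists>y \<in> X - T. T' = insert y T \<and> card T' = k' \<and> k' = Suc k)"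
  proof cases
    case 1
    then show ?thesis by simp
  next
    case (2 y)
    have "finite T" using fin sub finite_subset by blast
    then have "card T' = Suc (card T)" using 2 by simp
    then have "card T' = k' \<and> k' = Suc k" using card assms(4,5) by (simp add: min_def split: if_splits)
    moreover have "y \<in> X" using 2(1) top_subset[of R k' X] unfolding T'_def by blast
    ultimately show ?thesis using 2 by blast
  qed
  then show ?thesis unfolding T_def T'_def .
qed

section \<open>Coupled choices\<close>

text \<open>Processing a type with member set P and original reservation c, expressed through the set S
  chosen so far; with P = I and c = q it is the final fill by merit.\<close>
definition admit :: "'i rel \<Rightarrow> nat \<Rightarrow> 'i set \<Rightarrow> 'i set \<Rightarrow> nat \<Rightarrow> 'i set \<Rightarrow> 'i set" where
  "admit R q A P c S = S \<union> top R (min (q - card S) (c - card (S \<inter> P))) ((A - S) \<inter> P)"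

lemma admit_subset: "S \<subseteq> A \<Longrightarrow> admit R q A P c S \<subseteq> A"
  using top_subset[of R _ "(A - S) \<inter> P"] by (auto simp: admit_def)

text \<open>S and T are the sets chosen so far from A and from A \<union> {j}. Unless T = S \<union> {j}, j has
  displaced some x, and either all q positions are filled or x and j are alike for the family G of
  remaining types, so that both runs see the same remaining positions and reservations.\<close>
definition coupled :: "nat \<Rightarrow> 'i \<Rightarrow> 'i set set \<Rightarrow> 'i set \<Rightarrow> 'i set \<Rightarrow> bool" where
  "coupled q j G S T \<longleftrightarrow> T = insert j S \<or>
     (\<exists>x \<in> insert j S. T = insert j S - {x} \<and> (q \<le> card S \<or> (\<forall>Q \<in> G. x \<in> Q \<longleftrightarrow> j \<in> Q)))"

lemma coupled_subset: "coupled q j G S T \<Longrightarrow> T \<subseteq> insert j S"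
  by (auto simp: coupled_def)

lemma coupled_card_le:
  assumes "coupled q j G S T" "finite S" "j \<notin> S"
  shows "card S \<le> card T"
proof -
  consider "T = insert j S" | x where "x \<in> insert j S" "T = insert j S - {x}"
    using assms(1) unfolding coupled_def by blast
  then show ?thesis by cases (simp_all add: assms(2,3))
qed

lemma coupled_swap:
  assumes "x \<in> insert j S" "x \<notin> T" "\<forall>Q \<in> G. x \<in> Q \<longleftrightarrow> j \<in> Q"
  shows "coupled q j G (S \<union> T) (insert j S - {x} \<union> T)"
proof -
  have "insert j S - {x} \<union> T = insert j (S \<union> T) - {x}" using assms(2) by auto
  then show ?thesis using assms(1,3) unfolding coupled_def by blast
qed

lemma admit_coupled_insert:
  assumes "finite A" "A \<subseteq> I" "strict_linear_order_on I R" "j \<notin> A" "S \<subseteq> A"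
    and laminar: "\<forall>Q \<in> G. P \<subseteq> Q \<or> P \<inter> Q = {}"
  shows "coupled q j G (admit R q A P c S) (admit R q (insert j A) P c (insert j S))"
proof -
  define X where "X = (A - S) \<inter> P"
  define k1 where "k1 = min (q - card S) (c - card (S \<inter> P))"
  define k2 where "k2 = min (q - card (insert j S)) (c - card (insert j S \<inter> P))"
  have fS: "finite S" using assms(1,5) finite_subset by blast
  have jS: "j \<notin> S" using assms(4,5) by blast
  have cS: "card (insert j S) = Suc (card S)"
    "card (insert j S \<inter> P) = card (S \<inter> P) + (if j \<in> P then 1 else 0)"
    using fS jS by auto
  have k: "k2 \<le> k1" "k1 \<le> Suc k2"
    unfolding k1_def k2_def cS by (cases "j \<in> P"; auto simp: min_def)+
  have adm: "admit R q A P c S = S \<union> top R k1 X"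
    "admit R q (insert j A) P c (insert j S) = insert j S \<union> top R k2 X"
    using assms(4) by (auto simp: admit_def k1_def k2_def X_def Diff_insert2[symmetric])
  have "finite X" "X \<subseteq> I" using assms(1,2) by (auto simp: X_def)
  from top_mono_cases[OF this assms(3) k] consider "top R k1 X = top R k2 X"
    | y where "y \<in> X - top R k2 X" "top R k1 X = insert y (top R k2 X)" "card (top R k1 X) = k1"
        "k1 = Suc k2"
    by blast
  then show ?thesis
  proof cases
    case 1
    then show ?thesis by (simp add: coupled_def adm)
  next
    case (2 y)
    have y: "y \<in> P" "y \<notin> S" "y \<noteq> j" using 2(1) assms(4) by (auto simp: X_def)
    have "q \<le> card (S \<union> top R k1 X) \<or> (\<forall>Q \<in> G. y \<in> Q \<longleftrightarrow> j \<in> Q)"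
    proof (cases "j \<in> P")
      case True
      then show ?thesis using laminar y(1) by blast
    next
      case False
      \<comment> \<open>then only the capacity can have cut the second run short\<close>
      then have "k1 = q - card S" using 2(4) unfolding k1_def k2_def cS by (simp add: min_def split: if_splits)
      moreover have "card (S \<union> top R k1 X) = card S + card (top R k1 X)"
        using fS finite_subset[OF top_subset \<open>finite X\<close>] top_subset[of R k1 X]
        by (intro card_Un_disjoint) (auto simp: X_def)
      ultimately show ?thesis using 2(3) by linarith
    qed
    moreover have "insert j S \<union> top R k2 X = insert j (S \<union> top R k1 X) - {y}"
      using 2 y by auto
    ultimately show ?thesis using 2 unfolding coupled_def adm by blast
  qed
qed

lemma coupled_swap_top_insert:
  assumes "finite X" "insert x X \<subseteq> I" "strict_linear_order_on I R" "x \<notin> X"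
    and "x \<in> insert j S" "j \<notin> X" "S \<inter> X = {}"
    and twins: "\<forall>y \<in> insert x X. \<forall>Q \<in> G. y \<in> Q \<longleftrightarrow> j \<in> Q"
  shows "coupled q j G (S \<union> top R k X) (insert j S - {x} \<union> top R k (insert x X))"
proof -
  have "x \<notin> top R k X" using assms(4) top_subset[of R k X] by blast
  from top_insert_cases[OF assms(1-4)] consider "top R k (insert x X) = top R k X"
    | "top R k (insert x X) = insert x (top R k X)"
    | y where "y \<in> top R k X" "top R k (insert x X) = insert x (top R k X - {y})"
    by blast
  then show ?thesis
  proof cases
    case 1
    then show ?thesis using coupled_swap[OF assms(5) \<open>x \<notin> top R k X\<close>] twins by simp
  next
    case 2
    then have "insert j S - {x} \<union> top R k (insert x X) = insert j (S \<union> top R k X)"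
      using assms(5) by auto
    then show ?thesis unfolding coupled_def by blast
  next
    case (3 y)
    have "y \<in> X" using 3(1) top_subset[of R k X] by blast
    then have "y \<noteq> x" "y \<noteq> j" "y \<notin> S" using assms(4,6,7) by auto
    then have "insert j S - {x} \<union> top R k (insert x X) = insert j (S \<union> top R k X) - {y}"
      using 3 assms(5) by auto
    then show ?thesis using 3(1) twins \<open>y \<in> X\<close> unfolding coupled_def by blast
  qed
qed

lemma admit_coupled_displace:
  assumes "finite A" "insert j A \<subseteq> I" "strict_linear_order_on I R" "j \<notin> A" "S \<subseteq> A"
    and x: "x \<in> insert j S" and displaced: "q \<le> card S \<or> (\<forall>Q \<in> G. x \<in> Q \<longleftrightarrow> j \<in> Q)"
    and P: "P \<in> G \<or> insert j A \<subseteq> P"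
    and G': "G' \<subseteq> G" and laminar: "\<forall>Q \<in> G'. P \<subseteq> Q \<or> P \<inter> Q = {}"
  shows "coupled q j G' (admit R q A P c S) (admit R q (insert j A) P c (insert j S - {x}))"
proof -
  define S' where "S' = insert j S - {x}"
  have fS: "finite S" using assms(1,5) finite_subset by blast
  have jS: "j \<notin> S" using assms(4,5) by blast
  have cS': "card S' = card S" unfolding S'_def using fS jS x by simp
  consider (full) "q \<le> card S" | (twin) "\<forall>Q \<in> G. x \<in> Q \<longleftrightarrow> j \<in> Q"
    using displaced by blast
  then have "coupled q j G' (admit R q A P c S) (admit R q (insert j A) P c S')"
  proof cases
    case full
    then have "admit R q A P c S = S" "admit R q (insert j A) P c S' = S'"
      by (simp_all add: admit_def cS')
    moreover have "S' = insert j S - {x}" by (rule S'_def)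
    ultimately show ?thesis unfolding coupled_def using full x by (intro disjI2 bexI[of _ x]) simp_all
  next
    case twin
    have xA: "x \<in> insert j A" using x assms(5) by blast
    have xP: "x \<in> P \<longleftrightarrow> j \<in> P" using P twin xA by blast
    have "card (S' \<inter> P) = card (S \<inter> P)"
    proof (cases "j \<in> P")
      case True
      then have "S' \<inter> P = insert j (S \<inter> P) - {x}" and "x \<in> insert j (S \<inter> P)"
        using x xP unfolding S'_def by auto
      then show ?thesis using fS jS by simp
    next
      case False
      then have "S' \<inter> P = S \<inter> P" using xP unfolding S'_def by auto
      then show ?thesis by simp
    qed
    moreover have "insert j A - S' = insert x (A - S)" using x assms(4,5) unfolding S'_def by auto
    ultimately have adm: "admit R q A P c S = S \<union> top R k X"
      "admit R q (insert j A) P c S' = S' \<union> top R k (if x \<in> P then insert x X else X)"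
      if "k = min (q - card S) (c - card (S \<inter> P))" "X = (A - S) \<inter> P" for k X
      using that by (simp_all add: admit_def cS')
    let ?X = "(A - S) \<inter> P"
    have X: "finite ?X" "x \<notin> ?X" "j \<notin> ?X" "S \<inter> ?X = {}" using assms(1,4) x by auto
    show ?thesis
    proof (cases "x \<in> P")
      case True
      have "insert x ?X \<subseteq> I" using assms(2) xA by auto
      moreover have "\<forall>y \<in> insert x ?X. \<forall>Q \<in> G'. y \<in> Q \<longleftrightarrow> j \<in> Q"
        using laminar True xP by blast
      ultimately show ?thesis
        unfolding adm[OF refl refl] if_P[OF True] unfolding S'_def
        by (rule coupled_swap_top_insert[OF X(1) _ assms(3) X(2) x X(3,4)])
    next
      case False
      have "x \<notin> top R k ?X" for k using X(2) top_subset[of R k ?X] by blast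
      then show ?thesis
        unfolding adm[OF refl refl] if_not_P[OF False] unfolding S'_def
        using coupled_swap[OF x] twin G' by blast
    qed
  qed
  then show ?thesis by (simp only: S'_def)
qed

lemma admit_coupled:
  assumes "finite A" "insert j A \<subseteq> I" "strict_linear_order_on I R" "j \<notin> A" "S \<subseteq> A"
    and "coupled q j G S T" and "P \<in> G \<or> insert j A \<subseteq> P"
    and "G' \<subseteq> G" and "\<forall>Q \<in> G'. P \<subseteq> Q \<or> P \<inter> Q = {}"
  shows "coupled q j G' (admit R q A P c S) (admit R q (insert j A) P c T)"
proof -
  consider "T = insert j S"
    | x where "x \<in> insert j S" "T = insert j S - {x}"
        "q \<le> card S \<or> (\<forall>Q \<in> G. x \<in> Q \<longleftrightarrow> j \<in> Q)"
    using assms(6) unfolding coupled_def by blast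
  then show ?thesis
  proof cases
    case 1
    then show ?thesis using admit_coupled_insert[of A I R j S G' P q c] assms by simp
  next
    case (2 x)
    then show ?thesis using admit_coupled_displace[OF assms(1-5) 2(1,3) assms(7-9)] by simp
  qed
qed

section \<open>Running the procedure on A and on A \<union> {j}\<close>

lemma fst_process_type [simp]: "fst (process_type I R \<rho> A h st) = fst st - {h}"
  by (cases st) (simp add: process_type_def Let_def)

lemma foldl_process_type_invariant:
  assumes "\<And>h s1 s2. h \<in> set xs \<Longrightarrow> h \<in> fst s1 \<Longrightarrow> fst s1 \<subseteq> fst st1 \<Longrightarrow> Q s1 s2 \<Longrightarrow>
      Q (process_type I R \<rho> A1 h s1) (process_type I R \<rho> A2 h s2)"
    and "distinct xs" "set xs \<subseteq> fst st1" "Q st1 st2"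
  shows "Q (foldl (\<lambda>s h. process_type I R \<rho> A1 h s) st1 xs)
           (foldl (\<lambda>s h. process_type I R \<rho> A2 h s) st2 xs)"
  using assms
proof (induction xs arbitrary: st1 st2)
  case Nil
  then show ?case by simp
next
  case (Cons h xs)
  let ?st1 = "process_type I R \<rho> A1 h st1" and ?st2 = "process_type I R \<rho> A2 h st2"
  have "Q (process_type I R \<rho> A1 h' s1) (process_type I R \<rho> A2 h' s2)"
    if "h' \<in> set xs" "h' \<in> fst s1" "fst s1 \<subseteq> fst ?st1" "Q s1 s2" for h' s1 s2
    using that by (intro Cons.prems(1)) auto
  moreover have "distinct xs" "set xs \<subseteq> fst ?st1" using Cons.prems(2,3) by auto
  moreover have "Q ?st1 ?st2" using Cons.prems(1)[of h st1 st2] Cons.prems(3,4) by simp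
  ultimately have "Q (foldl (\<lambda>s h. process_type I R \<rho> A1 h s) ?st1 xs)
                     (foldl (\<lambda>s h. process_type I R \<rho> A2 h s) ?st2 xs)"
    by (rule Cons.IH)
  then show ?case by simp
qed

lemma round_invariant:
  assumes step: "\<And>h s1 s2. h \<in> minimal_types I \<rho> (fst s1) \<Longrightarrow> Q s1 s2 \<Longrightarrow>
      Q (process_type I R \<rho> A1 h s1) (process_type I R \<rho> A2 h s2)"
    and same_types: "\<And>s1 s2. Q s1 s2 \<Longrightarrow> fst s1 = fst s2"
    and "distinct hs" "Q st1 st2"
  shows "Q (round I R \<rho> hs A1 st1) (round I R \<rho> hs A2 st2)"
proof -
  define xs where "xs = filter (\<lambda>h. h \<in> minimal_types I \<rho> (fst st1)) hs"
  have "Q (foldl (\<lambda>s h. process_type I R \<rho> A1 h s) st1 xs)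
          (foldl (\<lambda>s h. process_type I R \<rho> A2 h s) st2 xs)"
  proof (rule foldl_process_type_invariant)
    fix h s1 s2 assume "h \<in> set xs" "h \<in> fst s1" "fst s1 \<subseteq> fst st1" "Q s1 s2"
    \<comment> \<open>minimality at the start of the round persists, as the round only removes types\<close>
    then show "Q (process_type I R \<rho> A1 h s1) (process_type I R \<rho> A2 h s2)"
      by (intro step) (auto simp: xs_def minimal_types_def)
  qed (use assms(3,4) in \<open>auto simp: xs_def minimal_types_def\<close>)
  then show ?thesis using same_types[OF assms(4)] by (simp add: round_def xs_def)
qed

lemma funpow_round_invariant:
  assumes "\<And>h s1 s2. h \<in> minimal_types I \<rho> (fst s1) \<Longrightarrow> Q s1 s2 \<Longrightarrow>
      Q (process_type I R \<rho> A1 h s1) (process_type I R \<rho> A2 h s2)"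
    and "\<And>s1 s2. Q s1 s2 \<Longrightarrow> fst s1 = fst s2"
    and "distinct hs" "Q st1 st2"
  shows "Q ((round I R \<rho> hs A1 ^^ n) st1) ((round I R \<rho> hs A2 ^^ n) st2)"
  using assms(4) by (induction n) (simp_all add: round_invariant[where Q = Q, OF assms(1-3)])

lemma minimal_type_preim_iff:
  assumes "hierarchical I H \<rho>" "Rem \<subseteq> H" "h \<in> minimal_types I \<rho> Rem" "h' \<in> Rem" "h' \<noteq> h"
    and "z \<in> preim I \<rho> h"
  shows "z \<in> preim I \<rho> h' \<longleftrightarrow> contains I \<rho> h' h"
proof
  assume z: "z \<in> preim I \<rho> h'"
  then have meet: "preim I \<rho> h \<inter> preim I \<rho> h' \<noteq> {}" using assms(6) by blast
  have "h \<in> Rem" "\<not> contains I \<rho> h h'" using assms(3,4) by (auto simp: minimal_types_def)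
  moreover have "preim I \<rho> h \<subset> preim I \<rho> h' \<or> preim I \<rho> h' \<subset> preim I \<rho> h"
    using assms(1,2,4,5) meet calculation(1) unfolding hierarchical_def by blast
  ultimately show "contains I \<rho> h' h" using meet unfolding contains_def by blast
next
  assume "contains I \<rho> h' h"
  then show "z \<in> preim I \<rho> h'" using assms(6) unfolding contains_def by blast
qed

lemma minimal_type_laminar:
  assumes "hierarchical I H \<rho>" "Rem \<subseteq> H" "h \<in> minimal_types I \<rho> Rem" "h' \<in> Rem"
  shows "preim I \<rho> h \<subseteq> preim I \<rho> h' \<or> preim I \<rho> h \<inter> preim I \<rho> h' = {}"
  using minimal_type_preim_iff[OF assms] unfolding contains_def by blast

definition consistent_state ::
    "'i set \<Rightarrow> ('i \<Rightarrow> 'h set) \<Rightarrow> nat \<Rightarrow> ('h \<Rightarrow> nat) \<Rightarrow> 'i set \<Rightarrow> ('i, 'h) st \<Rightarrow> bool" where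
  "consistent_state I \<rho> q \<kappa> A st \<longleftrightarrow> (case st of (Rem, S, p, kap) \<Rightarrow>
     S \<subseteq> A \<and> p = q - card S \<and> (\<forall>h \<in> Rem. kap h = \<kappa> h - card (S \<inter> preim I \<rho> h)))"

lemma process_type_consistent:
  assumes "finite A" "A \<subseteq> I" "hierarchical I H \<rho>" "fst st \<subseteq> H"
    and h: "h \<in> minimal_types I \<rho> (fst st)" and "consistent_state I \<rho> q \<kappa> A st"
  shows "fst (snd (process_type I R \<rho> A h st)) = admit R q A (preim I \<rho> h) (\<kappa> h) (fst (snd st))"
    and "consistent_state I \<rho> q \<kappa> A (process_type I R \<rho> A h st)"
proof -
  obtain Rem S p kap where st: "st = (Rem, S, p, kap)" by (cases st)
  have S: "S \<subseteq> A" and p: "p = q - card S"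
    and kap: "\<forall>h \<in> Rem. kap h = \<kappa> h - card (S \<inter> preim I \<rho> h)"
    using assms(6) by (auto simp: consistent_state_def st)
  have hRem: "h \<in> Rem" using h by (simp add: st minimal_types_def)
  define C where "C = top R (min (q - card S) (\<kappa> h - card (S \<inter> preim I \<rho> h))) ((A - S) \<inter> preim I \<rho> h)"
  have C: "C \<subseteq> A - S" "C \<subseteq> preim I \<rho> h"
    using top_subset[of R _ "(A - S) \<inter> preim I \<rho> h"] unfolding C_def by auto
  have fS: "finite S" and fC: "finite C" using assms(1) S C(1) finite_subset by blast+
  have X: "{i \<in> A - S. h \<in> \<rho> i} = (A - S) \<inter> preim I \<rho> h" using assms(2) by (auto simp: preim_def)
  have kh: "kap h = \<kappa> h - card (S \<inter> preim I \<rho> h)" using kap hRem by blast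
  have step: "process_type I R \<rho> A h st = (Rem - {h}, S \<union> C, p - card C,
      \<lambda>h'. if contains I \<rho> h' h then kap h' - card C else kap h')"
    unfolding st process_type_def Let_def prod.case X kh C_def p ..
  then show "fst (snd (process_type I R \<rho> A h st)) = admit R q A (preim I \<rho> h) (\<kappa> h) (fst (snd st))"
    by (simp add: st admit_def C_def)
  have "card (S \<union> C) = card S + card C" using fS fC C(1) by (intro card_Un_disjoint) auto
  moreover have "(if contains I \<rho> h' h then kap h' - card C else kap h') =
      \<kappa> h' - card ((S \<union> C) \<inter> preim I \<rho> h')" if h': "h' \<in> Rem - {h}" for h'
  proof (cases "contains I \<rho> h' h")
    case True
    then have "C \<subseteq> preim I \<rho> h'" using C(2) unfolding contains_def by blast
    then have "(S \<union> C) \<inter> preim I \<rho> h' = (S \<inter> preim I \<rho> h') \<union> C" by blast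
    moreover have "card ((S \<inter> preim I \<rho> h') \<union> C) = card (S \<inter> preim I \<rho> h') + card C"
      using fS fC C(1) by (intro card_Un_disjoint) auto
    ultimately show ?thesis using True kap h' by simp
  next
    case False
    have "C \<inter> preim I \<rho> h' = {}"
      using C(2) minimal_type_preim_iff[OF assms(3,4) h, of h'] False h' by (auto simp: st)
    then have "(S \<union> C) \<inter> preim I \<rho> h' = S \<inter> preim I \<rho> h'" by blast
    then show ?thesis using False kap h' by simp
  qed
  ultimately show "consistent_state I \<rho> q \<kappa> A (process_type I R \<rho> A h st)"
    using S C(1) p unfolding step consistent_state_def by auto
qed

definition coupled_states ::
    "'i set \<Rightarrow> 'h set \<Rightarrow> ('i \<Rightarrow> 'h set) \<Rightarrow> nat \<Rightarrow> ('h \<Rightarrow> nat) \<Rightarrow> 'i set \<Rightarrow> 'i \<Rightarrow>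
      ('i, 'h) st \<Rightarrow> ('i, 'h) st \<Rightarrow> bool" where
  "coupled_states I H \<rho> q \<kappa> A j st1 st2 \<longleftrightarrow> fst st1 = fst st2 \<and> fst st1 \<subseteq> H \<and>
     consistent_state I \<rho> q \<kappa> A st1 \<and> consistent_state I \<rho> q \<kappa> (insert j A) st2 \<and>
     coupled q j (preim I \<rho> ` fst st1) (fst (snd st1)) (fst (snd st2))"

lemma process_type_coupled:
  assumes "finite I" "strict_linear_order_on I R" "hierarchical I H \<rho>" "A \<subseteq> I" "j \<in> I" "j \<notin> A"
    and h: "h \<in> minimal_types I \<rho> (fst st1)" and st: "coupled_states I H \<rho> q \<kappa> A j st1 st2"
  shows "coupled_states I H \<rho> q \<kappa> A j (process_type I R \<rho> A h st1) (process_type I R \<rho> (insert j A) h st2)"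
proof -
  have types: "fst st1 = fst st2" "fst st1 \<subseteq> H"
    and con: "consistent_state I \<rho> q \<kappa> A st1" "consistent_state I \<rho> q \<kappa> (insert j A) st2"
    and cpl: "coupled q j (preim I \<rho> ` fst st1) (fst (snd st1)) (fst (snd st2))"
    using st unfolding coupled_states_def by blast+
  have fin: "finite A" "finite (insert j A)" "insert j A \<subseteq> I"
    using assms(1,4,5) finite_subset by auto
  note step1 = process_type_consistent[OF fin(1) assms(4,3) types(2) h con(1)]
  have "fst st2 \<subseteq> H" "h \<in> minimal_types I \<rho> (fst st2)" using types h by simp_all
  note step2 = process_type_consistent[OF fin(2,3) assms(3) this con(2)]
  have S1: "fst (snd st1) \<subseteq> A" using con(1) by (auto simp: consistent_state_def split: prod.splits)
  have P: "preim I \<rho> h \<in> preim I \<rho> ` fst st1" using h by (auto simp: minimal_types_def)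
  have laminar: "\<forall>Q \<in> preim I \<rho> ` (fst st1 - {h}). preim I \<rho> h \<subseteq> Q \<or> preim I \<rho> h \<inter> Q = {}"
    using minimal_type_laminar[OF assms(3) types(2) h] by blast
  have "coupled q j (preim I \<rho> ` (fst st1 - {h}))
      (admit R q A (preim I \<rho> h) (\<kappa> h) (fst (snd st1)))
      (admit R q (insert j A) (preim I \<rho> h) (\<kappa> h) (fst (snd st2)))"
    by (rule admit_coupled[OF fin(1,3) assms(2,6) S1 cpl]) (use P laminar in auto)
  then show ?thesis
    using types step1 step2 unfolding coupled_states_def by auto
qed

lemma rounds_coupled:
  assumes "finite I" "strict_linear_order_on I R" "distinct hs" "hierarchical I (set hs) \<rho>"
    and "A \<subseteq> I" "j \<in> I" "j \<notin> A"
  shows "coupled_states I (set hs) \<rho> q \<kappa> A j ((round I R \<rho> hs A ^^ n) (set hs, {}, q, \<kappa>))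
           ((round I R \<rho> hs (insert j A) ^^ n) (set hs, {}, q, \<kappa>))"
proof (rule funpow_round_invariant[where Q = "coupled_states I (set hs) \<rho> q \<kappa> A j"])
  fix h s1 s2
  assume "h \<in> minimal_types I \<rho> (fst s1)" "coupled_states I (set hs) \<rho> q \<kappa> A j s1 s2"
  then show "coupled_states I (set hs) \<rho> q \<kappa> A j (process_type I R \<rho> A h s1)
      (process_type I R \<rho> (insert j A) h s2)"
    by (rule process_type_coupled[OF assms(1,2,4-7)])
next
  show "coupled_states I (set hs) \<rho> q \<kappa> A j (set hs, {}, q, \<kappa>) (set hs, {}, q, \<kappa>)"
    by (auto simp: coupled_states_def consistent_state_def coupled_def)
qed (auto simp: coupled_states_def assms(3))

lemma rounds_untyped_choose_nothing:
  fixes \<rho> :: "'i \<Rightarrow> 'h set"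
  assumes "distinct hs" "\<forall>i \<in> A. \<rho> i = {}"
  shows "fst (snd ((round I R \<rho> hs A ^^ n) (Rem, {}, p, kap))) = {}"
proof -
  let ?Q = "\<lambda>s1 s2. s1 = s2 \<and> fst (snd s1) = {}"
  have "?Q ((round I R \<rho> hs A ^^ n) (Rem, {}, p, kap)) ((round I R \<rho> hs A ^^ n) (Rem, {}, p, kap))"
  proof (rule funpow_round_invariant[where Q = ?Q])
    fix h and s1 s2 :: "('i, 'h) st"
    assume s: "s1 = s2 \<and> fst (snd s1) = {}"
    have X: "{i \<in> A. h \<in> \<rho> i} = {}" using assms(2) by auto
    obtain Rem' p' kap' where "s1 = (Rem', {}, p', kap')" using s by (cases s1) auto
    then show "process_type I R \<rho> A h s1 = process_type I R \<rho> A h s2 \<and>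
        fst (snd (process_type I R \<rho> A h s1)) = {}"
      using s by (simp add: process_type_def Let_def X)
  qed (auto simp: assms(1))
  then show ?thesis by simp
qed

lemma Ch_eq_admit:
  assumes "distinct hs" "A \<subseteq> I"
    and "consistent_state I \<rho> q \<kappa> A ((round I R \<rho> hs A ^^ length hs) (set hs, {}, q, \<kappa>))"
  shows "Ch I R hs q A \<kappa> \<rho> =
    admit R q A I q (fst (snd ((round I R \<rho> hs A ^^ length hs) (set hs, {}, q, \<kappa>))))"
proof -
  obtain Rem S p kap where st: "(round I R \<rho> hs A ^^ length hs) (set hs, {}, q, \<kappa>) = (Rem, S, p, kap)"
    by (metis prod_cases4)
  have S: "S \<subseteq> A" "p = q - card S" using assms(3) by (simp_all add: st consistent_state_def)
  then have "S \<inter> I = S" "(A - S) \<inter> I = A - S" using assms(2) by auto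
  then have fill: "admit R q A I q S = S \<union> top R p (A - S)" by (simp add: admit_def S(2))
  show ?thesis
  proof (cases "\<forall>i \<in> A. \<rho> i = {}")
    case True
    then have "S = {}"
      using rounds_untyped_choose_nothing[OF assms(1) True, where Rem = "set hs" and p = q and kap = \<kappa>]
        st
      by (metis fst_conv snd_conv)
    then show ?thesis using True fill S(2) by (simp add: Ch_def st)
  next
    case False
    then show ?thesis unfolding Ch_def if_not_P[OF False] st by (simp add: fill)
  qed
qed

lemma Ch_insert:
  assumes "finite I" "strict_linear_order_on I R" "distinct hs" "hierarchical I (set hs) \<rho>"
    and "A \<subseteq> I" "j \<in> I" "j \<notin> A"
  shows "Ch I R hs q (insert j A) \<kappa> \<rho> \<subseteq> insert j (Ch I R hs q A \<kappa> \<rho>)"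
    and "card (Ch I R hs q A \<kappa> \<rho>) \<le> card (Ch I R hs q (insert j A) \<kappa> \<rho>)"
proof -
  define st1 st2 where "st1 = (round I R \<rho> hs A ^^ length hs) (set hs, {}, q, \<kappa>)"
    and "st2 = (round I R \<rho> hs (insert j A) ^^ length hs) (set hs, {}, q, \<kappa>)"
  have "coupled_states I (set hs) \<rho> q \<kappa> A j st1 st2"
    unfolding st1_def st2_def by (rule rounds_coupled[OF assms])
  then have con: "consistent_state I \<rho> q \<kappa> A st1" "consistent_state I \<rho> q \<kappa> (insert j A) st2"
    and cpl: "coupled q j (preim I \<rho> ` fst st1) (fst (snd st1)) (fst (snd st2))"
    unfolding coupled_states_def by blast+
  have S1: "fst (snd st1) \<subseteq> A" using con(1) by (auto simp: consistent_state_def split: prod.splits)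
  have fin: "finite A" "insert j A \<subseteq> I" using assms(1,5,6) finite_subset by auto
  have "coupled q j {} (admit R q A I q (fst (snd st1))) (admit R q (insert j A) I q (fst (snd st2)))"
    by (rule admit_coupled[OF fin assms(2,7) S1 cpl]) (use fin in auto)
  moreover have "Ch I R hs q A \<kappa> \<rho> = admit R q A I q (fst (snd st1))"
    using Ch_eq_admit[OF assms(3,5)] con(1) unfolding st1_def by blast
  moreover have "Ch I R hs q (insert j A) \<kappa> \<rho> = admit R q (insert j A) I q (fst (snd st2))"
    using Ch_eq_admit[OF assms(3) fin(2)] con(2) unfolding st2_def by blast
  ultimately have cpl': "coupled q j {} (Ch I R hs q A \<kappa> \<rho>) (Ch I R hs q (insert j A) \<kappa> \<rho>)"
    by simp
  show "Ch I R hs q (insert j A) \<kappa> \<rho> \<subseteq> insert j (Ch I R hs q A \<kappa> \<rho>)"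
    using cpl' by (rule coupled_subset)
  have "Ch I R hs q A \<kappa> \<rho> \<subseteq> A" using admit_subset[OF S1] \<open>Ch I R hs q A \<kappa> \<rho> = _\<close> by simp
  then show "card (Ch I R hs q A \<kappa> \<rho>) \<le> card (Ch I R hs q (insert j A) \<kappa> \<rho>)"
    using cpl' fin(1) assms(7) by (intro coupled_card_le) (auto intro: finite_subset)
qed

theorem proposition2:
  fixes I :: "'i set" and R :: "'i rel" and hs :: "'h list" and q :: nat
    and \<kappa> :: "'h \<Rightarrow> nat" and \<rho> :: "'i \<Rightarrow> 'h set"
  assumes "finite I"
    and "strict_linear_order_on I R"
    and "distinct hs"
    and "\<forall>i\<in>I. \<rho> i \<subseteq> set hs"
    and "hierarchical I (set hs) \<rho>"
  shows "(\<forall>A i j. A \<subseteq> I \<and> i \<in> I \<and> j \<in> I \<and> i \<notin> A \<and> j \<notin> A \<and> i \<noteq> j \<and>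
            i \<in> Ch I R hs q (A \<union> {i, j}) \<kappa> \<rho> \<longrightarrow> i \<in> Ch I R hs q (A \<union> {i}) \<kappa> \<rho>)
       \<and> (\<forall>A i. A \<subseteq> I \<and> i \<in> I \<longrightarrow>
            card (Ch I R hs q A \<kappa> \<rho>) \<le> card (Ch I R hs q (A \<union> {i}) \<kappa> \<rho>))"
proof (intro conjI allI impI)
  fix A i j
  assume *: "A \<subseteq> I \<and> i \<in> I \<and> j \<in> I \<and> i \<notin> A \<and> j \<notin> A \<and> i \<noteq> j \<and>
    i \<in> Ch I R hs q (A \<union> {i, j}) \<kappa> \<rho>"
  then have "Ch I R hs q (insert j (insert i A)) \<kappa> \<rho> \<subseteq> insert j (Ch I R hs q (insert i A) \<kappa> \<rho>)"
    by (intro Ch_insert(1)[OF assms(1,2,3,5)]) auto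
  moreover have "A \<union> {i, j} = insert j (insert i A)" "A \<union> {i} = insert i A" by auto
  ultimately show "i \<in> Ch I R hs q (A \<union> {i}) \<kappa> \<rho>" using * by auto
next
  fix A i
  assume "A \<subseteq> I \<and> i \<in> I"
  then show "card (Ch I R hs q A \<kappa> \<rho>) \<le> card (Ch I R hs q (A \<union> {i}) \<kappa> \<rho>)"
    using Ch_insert(2)[OF assms(1,2,3,5)] by (cases "i \<in> A") (auto simp: insert_absorb)
qed

end
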